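(* For any integers $n\ge k\ge 1$ and any positive integers $n_1\le n_2\le\cdots\le n_k$ with $n_1+\cdots+n_k=n$, the directed graph $\mathcal D(n_1,\ldots,n_k)$ is acyclic.
   Context: Let $n_1\le\cdots\le n_k$ be positive integers. The graph $\mathcal G(n_1,\ldots,n_k)$ has vertices $v_{j,a}$ for $1\le j\le k$, $1\le a\le n_j$, and the following edges: the path edges $v_{j,a}v_{j,a+1}$ for $1\le j\le k$, $1\le a<n_j$ (forming paths $P_j=v_{j,1}v_{j,2}\cdots v_{j,n_j}$); and, for each pair $1\le h<j\le k$: (i) $v_{h,a}v_{j,a}$ for each $1\le a<n_h$; (ii) $v_{h,a+1}v_{j,a}$ for each $1\le a<n_h$; (iii) $v_{h,n_h}v_{j,a}$ for each $n_h\le a\le n_j$. Let $f$ be the function defined on vertices $v_{j,a}$ with $a<n_j$ by $f(v_{j,a})=v_{j,a+1}$. The digraph $\mathcal D(n_1,\ldots,n_k)$ (the influence digraph of $f$) has vertex set $V(\mathcal G(n_1,\ldots,n_k))$ and an arc $v\to w$ if and only if $v$ is in the domain of $f$, $v\ne w$, and either $w=f(v)$ or $w$ is adjacent to $f(v)$ in $\mathcal G(n_1,\ldots,n_k)$. *)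

theory Defs
  imports Main
begin

(* The parameters n_1 <= ... <= n_k are given as a list ns of length k;
   n_j = ns ! (j - 1).  Vertex v_{j,a} is the pair (j, a), 1-based. *)

definition nlen :: "nat list \<Rightarrow> nat \<Rightarrow> nat" where
  "nlen ns j = ns ! (j - 1)"

definition G_verts :: "nat list \<Rightarrow> (nat \<times> nat) set" where
  "G_verts ns = {(j, a). 1 \<le> j \<and> j \<le> length ns \<and> 1 \<le> a \<and> a \<le> nlen ns j}"

(* the listed edges of G(n_1,...,n_k), one orientation each *)
definition G_edge :: "nat list \<Rightarrow> nat \<times> nat \<Rightarrow> nat \<times> nat \<Rightarrow> bool" where
  "G_edge ns u w \<longleftrightarrow>
     (\<exists>j a. 1 \<le> j \<and> j \<le> length ns \<and> 1 \<le> a \<and> a < nlen ns j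
            \<and> u = (j, a) \<and> w = (j, a + 1))
   \<or> (\<exists>h j a. 1 \<le> h \<and> h < j \<and> j \<le> length ns \<and> 1 \<le> a \<and> a < nlen ns h
            \<and> u = (h, a) \<and> w = (j, a))
   \<or> (\<exists>h j a. 1 \<le> h \<and> h < j \<and> j \<le> length ns \<and> 1 \<le> a \<and> a < nlen ns h
            \<and> u = (h, a + 1) \<and> w = (j, a))
   \<or> (\<exists>h j a. 1 \<le> h \<and> h < j \<and> j \<le> length ns \<and> nlen ns h \<le> a \<and> a \<le> nlen ns j
            \<and> u = (h, nlen ns h) \<and> w = (j, a))"

definition G_adj :: "nat list \<Rightarrow> nat \<times> nat \<Rightarrow> nat \<times> nat \<Rightarrow> bool" where
  "G_adj ns u w \<longleftrightarrow> G_edge ns u w \<or> G_edge ns w u"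

definition f_dom :: "nat list \<Rightarrow> (nat \<times> nat) set" where
  "f_dom ns = {(j, a). (j, a) \<in> G_verts ns \<and> a < nlen ns j}"

definition f_map :: "nat \<times> nat \<Rightarrow> nat \<times> nat" where
  "f_map v = (fst v, snd v + 1)"

definition D_arcs :: "nat list \<Rightarrow> ((nat \<times> nat) \<times> (nat \<times> nat)) set" where
  "D_arcs ns = {(v, w). v \<in> G_verts ns \<and> w \<in> G_verts ns \<and> v \<in> f_dom ns \<and> v \<noteq> w
                        \<and> (w = f_map v \<or> G_adj ns w (f_map v))}"

end

theory Submission
  imports Defs "HOL-Library.Product_Lexorder"
begin

(* Order the vertices v_{j,a} lexicographically by the key (a, j):
   first by position a along the path, then by the path index j.  Every arc
   v -> w of D(n_1,...,n_k) starts in the domain of f and either ends outside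
   it (at the last vertex of some path, which has no outgoing arcs) or ends at
   a vertex of strictly larger key.  A relation whose arcs strictly increase
   such a potential, with the non-domain vertices acting as sinks, cannot
   contain a cycle.

   The argument does not need the hypotheses on n_1 <= ... <= n_k: the
   digraph is acyclic for every list of parameters. *)

lemma acyclic_if_rank_increases:
  fixes R :: "('a \<times> 'a) set" and rank :: "'a \<Rightarrow> 'b::order"
  assumes arc: "\<And>v w. (v, w) \<in> R \<Longrightarrow> v \<in> S \<and> (w \<notin> S \<or> rank v < rank w)"
  shows "acyclic R"
proof -
  have path: "v \<in> S \<and> (w \<notin> S \<or> rank v < rank w)" if "(v, w) \<in> R\<^sup>+" for v w
    using that
  proof (induction rule: trancl_induct)
    case (base w)
    then show ?case by (rule arc)
  next
    case (step u w)
    with arc[OF step.hyps(2)] show ?case by (auto dest: less_trans)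
  qed
  show ?thesis
    unfolding acyclic_def using path by fastforce
qed

definition vkey :: "nat \<times> nat \<Rightarrow> nat \<times> nat" where
  "vkey v = (snd v, fst v)"

(* A neighbour of f(v_{j,a}) = v_{j,a+1} in G is v_{j,a} itself, a last vertex
   v_{h,n_h} (outside dom f), or a vertex of larger key: the edges of G only
   join positions a and a+1 or positions on the same level, and an edge of
   type (iii) reaches v_{j,a+1} only from an end vertex v_{h,n_h}. *)
lemma G_adj_succ_key:
  assumes "G_adj ns w (j, a + 1)"
  shows "w = (j, a) \<or> w \<notin> f_dom ns \<or> vkey (j, a) < vkey w"
  using assms unfolding G_adj_def G_edge_def f_dom_def G_verts_def vkey_def
  by auto

lemma D_arc_increases_key:
  assumes "(v, w) \<in> D_arcs ns"
  shows "v \<in> f_dom ns \<and> (w \<notin> f_dom ns \<or> vkey v < vkey w)"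
proof -
  obtain j a where v: "v = (j, a)" by (cases v)
  from assms have dom: "v \<in> f_dom ns" and "v \<noteq> w"
    and target: "w = (j, a + 1) \<or> G_adj ns w (j, a + 1)"
    unfolding D_arcs_def f_map_def v by auto
  from target \<open>v \<noteq> w\<close> have "w \<notin> f_dom ns \<or> vkey v < vkey w"
    using G_adj_succ_key[of ns w j a] unfolding v vkey_def by auto
  with dom show ?thesis by blast
qed

theorem mainTheorem9:
  fixes n k :: nat and ns :: "nat list"
  assumes "1 \<le> k" and "k \<le> n"
    and "length ns = k"
    and "\<forall>x\<in>set ns. 0 < x"
    and "sorted ns"
    and "sum_list ns = n"
  shows "acyclic (D_arcs ns)"
  using D_arc_increases_key by (rule acyclic_if_rank_increases)

end
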